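(* Let $A,B,C,q,z$ be complex numbers with $|q|<1$, $|z|<1$ (generic, so that all denominators are nonzero and all series converge). Then $${}_{2}\phi_{1}\Big[\genfrac{}{}{0pt}{}{A,B}{C};q,z\Big]=\sum_{n=0}^{\infty}\frac{(ABq/C,ABz/C;q)_n}{(q,z;q)_n}z^nq^{n(n-1)}\Big(1-\frac{ABzq^{2n}}{C}\Big)\,{}_{4}\phi_{3}\Big[\genfrac{}{}{0pt}{}{ABzq^n/C,\ ABzq^{2n+1}/C,\ C/A,\ C/B}{C,\ zq^n,\ ABzq^{2n}/C};q,\frac{ABzq^n}{C}\Big].$$
   Context: $(x;q)_n=\prod_{j=0}^{n-1}(1-xq^j)$ and $(x_1,\dots,x_m;q)_n=\prod_{i=1}^m(x_i;q)_n$. The basic hypergeometric series is ${}_{s+1}\phi_s\big[\genfrac{}{}{0pt}{}{a_1,\ldots,a_{s+1}}{b_1,\ldots,b_{s}};q,w\big]=\sum_{n\ge0}\frac{(a_1,\ldots,a_{s+1};q)_n}{(q,b_1,\ldots,b_s;q)_n}w^n$. *)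

theory Defs
  imports Complex_Main
begin

definition qpoch :: "complex \<Rightarrow> complex \<Rightarrow> nat \<Rightarrow> complex" where
  "qpoch x q n = (\<Prod>j<n. 1 - x * q ^ j)"

text \<open>(x_1,...,x_m;q)_n as a product over a list of parameters.\<close>
definition qpochs :: "complex list \<Rightarrow> complex \<Rightarrow> nat \<Rightarrow> complex" where
  "qpochs xs q n = (\<Prod>x\<leftarrow>xs. qpoch x q n)"

definition qphi_term :: "complex list \<Rightarrow> complex list \<Rightarrow> complex \<Rightarrow> complex \<Rightarrow> nat \<Rightarrow> complex" where
  "qphi_term as bs q w n = qpochs as q n / (qpoch q q n * qpochs bs q n) * w ^ n"

definition qphi :: "complex list \<Rightarrow> complex list \<Rightarrow> complex \<Rightarrow> complex \<Rightarrow> complex" where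
  "qphi as bs q w = (\<Sum>n. qphi_term as bs q w n)"

end

theory Submission
  imports Defs "HOL-Analysis.Analysis"
begin

text \<open>Write \<open>g = AB/C\<close>. Both sides equal \<open>\<^sub>1\<phi>\<^sub>0(g; q, z) \<^sub>2\<phi>\<^sub>1(C/A, C/B; C; q, gz)\<close>.
  For the left-hand side this is Euler's transformation: comparing coefficients of the Cauchy
  product leaves a finite convolution identity, which follows from a first-order recurrence
  proved by telescoping.

  On the right-hand side, after expanding each \<open>\<^sub>4\<phi>\<^sub>3\<close> the \<open>(n, k)\<close> term factors as
  the \<open>k\<close>-th term of \<open>\<^sub>2\<phi>\<^sub>1(C/A, C/B; C; q, gz)\<close> times \<open>(gz;q)\<^sub>k / (z;q)\<^sub>k\<close> times
  the \<open>n\<close>-th term of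
  \<open>E(W) = \<Sum>\<^sub>n (gq, gW;q)\<^sub>n / (q, W;q)\<^sub>n W^n q^(n(n-1)) (1 - gWq^(2n))\<close>
  at \<open>W = q^k z\<close>. The series \<open>E(W)\<close> equals \<open>\<^sub>1\<phi>\<^sub>0(g; q, W)\<close>: both satisfy
  \<open>(1 - W) F(W) = (1 - gW) F(qW)\<close> and tend to \<open>1\<close> along \<open>q^k W\<close>. The same equation gives
  \<open>\<^sub>1\<phi>\<^sub>0(g; q, q^k z) (gz;q)\<^sub>k = \<^sub>1\<phi>\<^sub>0(g; q, z) (z;q)\<^sub>k\<close>, which cancels the extra
  factor; the double series converges absolutely, so the two summations may be interchanged.\<close>

section \<open>\<open>q\<close>-Pochhammer symbols\<close>

lemma qpoch_0 [simp]: "qpoch x q 0 = 1"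
  by (simp add: qpoch_def)

lemma qpoch_Suc: "qpoch x q (Suc n) = qpoch x q n * (1 - x * q ^ n)"
  by (simp add: qpoch_def)

lemma qpoch_Suc_shift: "qpoch x q (Suc n) = (1 - x) * qpoch (x * q) q n"
  unfolding qpoch_def by (subst prod.lessThan_Suc_shift) (simp add: mult.assoc)

lemma qpoch_add: "qpoch x q (m + n) = qpoch x q m * qpoch (x * q ^ m) q n"
  by (induction n) (simp_all add: qpoch_Suc power_add mult.assoc)

lemma qpochs_Suc: "qpochs xs q (Suc n) = qpochs xs q n * (\<Prod>x\<leftarrow>xs. 1 - x * q ^ n)"
  by (induction xs) (simp_all add: qpochs_def qpoch_Suc ac_simps)

lemma qpoch_0_left [simp]: "qpoch 0 q n = 1"
  by (simp add: qpoch_def)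

lemma qpoch_tendsto: "(f \<longlongrightarrow> a) F \<Longrightarrow> ((\<lambda>k. qpoch (f k) q n) \<longlongrightarrow> qpoch a q n) F"
  unfolding qpoch_def by (intro tendsto_intros)

lemma norm_mult_power_le: "norm (q::complex) \<le> 1 \<Longrightarrow> norm (w * q ^ i) \<le> norm w"
  by (simp add: norm_mult norm_power mult_left_le power_le_one)

lemma norm_power_mult_le: "norm (q::complex) \<le> 1 \<Longrightarrow> norm (q ^ k * Z) \<le> norm Z"
  using norm_mult_power_le[of q Z k] by (simp add: mult.commute)

lemma norm_power_mult_less_1: "norm (q::complex) < 1 \<Longrightarrow> norm Z < 1 \<Longrightarrow> norm (q ^ k * Z) < 1"
  using norm_power_mult_le[of q k Z] by simp

lemma qpoch_nonzero:
  assumes "norm q \<le> 1" and "norm w < 1"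
  shows "qpoch w q n \<noteq> 0"
proof -
  have "norm (w * q ^ i) < 1" for i
    using norm_mult_power_le[OF assms(1)] assms(2) order.strict_trans1 by blast
  hence "1 - w * q ^ i \<noteq> 0" for i
    by (metis norm_one order.irrefl right_minus_eq)
  thus ?thesis by (simp add: qpoch_def)
qed

lemma qpoch_q_nonzero: "norm q < 1 \<Longrightarrow> qpoch q q n \<noteq> 0"
  by (rule qpoch_nonzero) auto

lemma one_minus_q_power_Suc_nonzero: "norm (q::complex) < 1 \<Longrightarrow> 1 - q * q ^ n \<noteq> 0"
  using qpoch_q_nonzero[of q "Suc n"] by (simp add: qpoch_Suc)

lemma norm_qpoch_le:
  assumes "norm q \<le> 1"
  shows "norm (qpoch w q n) \<le> (1 + norm w) ^ n"
proof (induction n)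
  case (Suc n)
  have "norm (1 - w * q ^ n) \<le> 1 + norm w"
    using norm_triangle_ineq4[of 1 "w * q ^ n"] norm_mult_power_le[OF assms, of w n] by simp
  hence "norm (qpoch w q n) * norm (1 - w * q ^ n) \<le> (1 + norm w) ^ n * (1 + norm w)"
    using Suc by (intro mult_mono) auto
  thus ?case by (simp add: qpoch_Suc norm_mult mult.commute)
qed simp

lemma norm_qpoch_ge:
  assumes "norm q \<le> 1" and "norm w \<le> 1"
  shows "(1 - norm w) ^ n \<le> norm (qpoch w q n)"
proof (induction n)
  case (Suc n)
  have "1 - norm w \<le> norm (1 - w * q ^ n)"
    using norm_triangle_ineq2[of 1 "w * q ^ n"] norm_mult_power_le[OF assms(1), of w n] by simp
  hence "(1 - norm w) ^ n * (1 - norm w) \<le> norm (qpoch w q n) * norm (1 - w * q ^ n)"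
    using Suc assms(2) by (intro mult_mono) auto
  thus ?case by (simp add: qpoch_Suc norm_mult mult.commute)
qed simp

definition qpoch_inf :: "complex \<Rightarrow> complex \<Rightarrow> complex" where
  "qpoch_inf x q = prodinf (\<lambda>i. 1 - x * q ^ i)"

lemma convergent_prod_qpoch:
  assumes "norm (q::complex) < 1"
  shows "convergent_prod (\<lambda>i. 1 - w * q ^ i)"
proof (rule abs_convergent_prod_imp_convergent_prod, rule summable_imp_abs_convergent_prod)
  have "summable (\<lambda>i. norm w * norm q ^ i)"
    using assms by (intro summable_mult summable_geometric) simp
  thus "summable (\<lambda>i. norm (1 - w * q ^ i - 1))"
    by (simp add: norm_mult norm_power)
qed

lemma qpoch_LIMSEQ: "norm q < 1 \<Longrightarrow> qpoch w q \<longlonglongrightarrow> qpoch_inf w q"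
  using convergent_prod_LIMSEQ[OF convergent_prod_qpoch] LIMSEQ_lessThan_iff_atMost
  unfolding qpoch_def qpoch_inf_def by blast

lemma qpoch_inf_nonzero:
  "norm q < 1 \<Longrightarrow> (\<And>i. 1 - w * q ^ i \<noteq> 0) \<Longrightarrow> qpoch_inf w q \<noteq> 0"
  unfolding qpoch_inf_def by (rule prodinf_nonzero[OF convergent_prod_qpoch])

lemma qpochs_LIMSEQ:
  "norm q < 1 \<Longrightarrow> qpochs xs q \<longlonglongrightarrow> (\<Prod>x\<leftarrow>xs. qpoch_inf x q)"
proof (induction xs)
  case (Cons x xs)
  hence "(\<lambda>n. qpoch x q n * qpochs xs q n) \<longlonglongrightarrow> qpoch_inf x q * (\<Prod>x\<leftarrow>xs. qpoch_inf x q)"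
    by (intro tendsto_mult qpoch_LIMSEQ)
  thus ?case by (simp add: qpochs_def)
next
  case Nil
  have "qpochs [] q = (\<lambda>_. 1)" by (simp add: fun_eq_iff qpochs_def)
  thus ?case by simp
qed

lemma prod_list_one_minus_power_LIMSEQ:
  "norm (q::complex) < 1 \<Longrightarrow> (\<lambda>k. \<Prod>x\<leftarrow>xs. 1 - x * q ^ k) \<longlonglongrightarrow> 1"
proof (induction xs)
  case (Cons x xs)
  have "(\<lambda>k. (1 - x * q ^ k) * (\<Prod>x\<leftarrow>xs. 1 - x * q ^ k)) \<longlonglongrightarrow> (1 - x * 0) * 1"
    using Cons by (intro tendsto_intros LIMSEQ_power_zero)
  thus ?case by simp
qed simp

section \<open>Terms of basic hypergeometric series\<close>

lemma summable_norm_if_ratio_LIMSEQ: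
  fixes f :: "nat \<Rightarrow> 'a::real_normed_div_algebra"
  assumes ratio: "\<And>n. f (Suc n) = r n * f n" and "r \<longlonglongrightarrow> l" and "norm l < 1"
  shows "summable (\<lambda>n. norm (f n))"
proof -
  define c where "c = (1 + norm l) / 2"
  have c: "norm l < c" "c < 1" using \<open>norm l < 1\<close> by (auto simp: c_def)
  have "eventually (\<lambda>n. norm (r n) < c) sequentially"
    using order_tendstoD(2)[OF tendsto_norm[OF \<open>r \<longlonglongrightarrow> l\<close>] c(1)] .
  then obtain N where N: "\<And>n. n \<ge> N \<Longrightarrow> norm (r n) < c"
    by (auto simp: eventually_at_top_linorder)
  show ?thesis
  proof (rule summable_ratio_test[OF c(2)])
    fix n assume "n \<ge> N"
    thus "norm (norm (f (Suc n))) \<le> c * norm (norm (f n))"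
      using N[of n] by (simp add: ratio norm_mult mult_right_mono)
  qed
qed

lemma qpochs_0 [simp]: "qpochs xs q 0 = 1"
  by (induction xs) (simp_all add: qpochs_def)

lemma qphi_term_0 [simp]: "qphi_term as bs q w 0 = 1"
  by (simp add: qphi_term_def)

lemma qphi_term_Suc:
  "qphi_term as bs q w (Suc k) = (\<Prod>a\<leftarrow>as. 1 - a * q ^ k) * w
     / ((1 - q * q ^ k) * (\<Prod>b\<leftarrow>bs. 1 - b * q ^ k)) * qphi_term as bs q w k"
  by (simp add: qphi_term_def qpochs_Suc qpoch_Suc divide_inverse ac_simps)

lemma qphi_term_mult_power: "qphi_term as bs q (w * z) k = qphi_term as bs q w k * z ^ k"
  by (simp add: qphi_term_def power_mult_distrib)

lemma qphi_term_terminates: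
  assumes "a \<in> set as" and "1 - a * q ^ i = 0" and "i < k"
  shows "qphi_term as bs q w k = 0"
proof -
  have "qpoch a q k = 0"
    using assms(2,3) unfolding qpoch_def by (metis finite_lessThan lessThan_iff prod_zero)
  hence "qpochs as q k = 0"
    using assms(1) unfolding qpochs_def by (induction as) auto
  thus ?thesis by (simp add: qphi_term_def)
qed

lemma summable_norm_qphi_term:
  assumes q: "norm q < 1" and w: "norm w < 1" and bs: "\<And>n. qpochs bs q n \<noteq> 0"
  shows "summable (\<lambda>k. norm (qphi_term as bs q w k))"
proof (rule summable_norm_if_ratio_LIMSEQ)
  show "qphi_term as bs q w (Suc k) = (\<Prod>a\<leftarrow>as. 1 - a * q ^ k) * w
           / ((1 - q * q ^ k) * (\<Prod>b\<leftarrow>bs. 1 - b * q ^ k)) * qphi_term as bs q w k" for k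
    by (rule qphi_term_Suc)
  have "(\<lambda>k. (\<Prod>a\<leftarrow>as. 1 - a * q ^ k) * w / ((1 - q * q ^ k) * (\<Prod>b\<leftarrow>bs. 1 - b * q ^ k)))
          \<longlonglongrightarrow> 1 * w / ((1 - q * 0) * 1)"
    using q by (intro tendsto_intros prod_list_one_minus_power_LIMSEQ LIMSEQ_power_zero) simp_all
  thus "(\<lambda>k. (\<Prod>a\<leftarrow>as. 1 - a * q ^ k) * w / ((1 - q * q ^ k) * (\<Prod>b\<leftarrow>bs. 1 - b * q ^ k)))
          \<longlonglongrightarrow> w"
    by simp
qed (use w in simp)

text \<open>Without termination the coefficients \<open>qphi_term as bs q w k / w ^ k\<close> tend to the nonzero
  constant \<open>(as;q)\<^sub>\<infinity> / (q, bs;q)\<^sub>\<infinity>\<close>.\<close>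
lemma norm_lt_1_if_qphi_term_LIMSEQ_0:
  assumes q: "norm q < 1"
    and nonterminating: "\<And>a i. a \<in> set as \<Longrightarrow> 1 - a * q ^ i \<noteq> 0"
    and bs: "\<And>n. qpochs bs q n \<noteq> 0"
    and lim: "qphi_term as bs q w \<longlonglongrightarrow> 0"
  shows "norm w < 1"
proof (rule ccontr)
  assume "\<not> norm w < 1"
  hence w: "1 \<le> norm w" "w \<noteq> 0" by auto
  have "(\<lambda>k. qphi_term as bs q w k / w ^ k) \<longlonglongrightarrow> 0"
  proof (rule tendsto_0_le[OF lim, of _ 1])
    have "norm (qphi_term as bs q w k / w ^ k) \<le> norm (qphi_term as bs q w k)" for k
      using w by (simp add: norm_divide norm_power divide_le_eq mult_le_cancel_left1 one_le_power)
    thus "\<forall>\<^sub>F k in sequentially. norm (qphi_term as bs q w k / w ^ k) \<le> norm (qphi_term as bs q w k) * 1"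
      by simp
  qed
  hence "(\<lambda>k. qphi_term as bs q w k / w ^ k * (qpoch q q k * qpochs bs q k))
           \<longlonglongrightarrow> 0 * (qpoch_inf q q * (\<Prod>b\<leftarrow>bs. qpoch_inf b q))"
    by (intro tendsto_intros qpoch_LIMSEQ qpochs_LIMSEQ q)
  moreover have "qphi_term as bs q w k / w ^ k * (qpoch q q k * qpochs bs q k) = qpochs as q k" for k
    using w(2) bs[of k] qpoch_q_nonzero[OF q, of k] by (simp add: qphi_term_def)
  ultimately have "qpochs as q \<longlonglongrightarrow> 0"
    by simp
  moreover have "qpochs as q \<longlonglongrightarrow> (\<Prod>a\<leftarrow>as. qpoch_inf a q)"
    by (rule qpochs_LIMSEQ[OF q])
  moreover have "(\<Prod>a\<leftarrow>as. qpoch_inf a q) \<noteq> 0"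
    using nonterminating qpoch_inf_nonzero[OF q] by (auto simp: prod_list_zero_iff)
  ultimately show False
    using LIMSEQ_unique by blast
qed

section \<open>The \<open>q\<close>-binomial series and its expansion\<close>

lemma q_difference_iterate:
  assumes difference_eq: "\<And>W. norm W < 1 \<Longrightarrow> (1 - W) * \<Phi> W = (1 - g * W) * \<Phi> (q * W)"
    and q: "norm (q::complex) < 1" and Z: "norm Z < 1"
  shows "\<Phi> Z * qpoch Z q k = qpoch (g * Z) q k * \<Phi> (q ^ k * Z)"
proof (induction k)
  case (Suc k)
  have "\<Phi> Z * qpoch Z q (Suc k) = (\<Phi> Z * qpoch Z q k) * (1 - q ^ k * Z)"
    by (simp add: qpoch_Suc ac_simps)
  also have "\<dots> = qpoch (g * Z) q k * ((1 - q ^ k * Z) * \<Phi> (q ^ k * Z))"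
    using Suc by simp
  also have "\<dots> = qpoch (g * Z) q k * ((1 - g * (q ^ k * Z)) * \<Phi> (q * (q ^ k * Z)))"
    by (simp only: difference_eq[OF norm_power_mult_less_1[OF q Z]])
  also have "\<dots> = qpoch (g * Z) q (Suc k) * \<Phi> (q ^ Suc k * Z)"
    by (simp add: qpoch_Suc ac_simps)
  finally show ?case .
qed simp

text \<open>Iterating the equation expresses \<open>\<Phi> Z\<close> through \<open>\<Phi> (q\<^sup>k Z)\<close> with a factor independent
  of \<open>\<Phi>\<close>; letting \<open>k \<rightarrow> \<infinity>\<close> removes the dependence on \<open>\<Phi>\<close>.\<close>
lemma q_difference_solution_unique:
  assumes q: "norm (q::complex) < 1" and Z: "norm Z < 1"
    and \<Phi>: "\<And>W. norm W < 1 \<Longrightarrow> (1 - W) * \<Phi> W = (1 - g * W) * \<Phi> (q * W)"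
    and \<Psi>: "\<And>W. norm W < 1 \<Longrightarrow> (1 - W) * \<Psi> W = (1 - g * W) * \<Psi> (q * W)"
    and \<Phi>_lim: "(\<lambda>k. \<Phi> (q ^ k * Z)) \<longlonglongrightarrow> 1" and \<Psi>_lim: "(\<lambda>k. \<Psi> (q ^ k * Z)) \<longlonglongrightarrow> 1"
  shows "\<Phi> Z = \<Psi> Z"
proof -
  have "\<Phi> Z * \<Psi> (q ^ k * Z) = \<Psi> Z * \<Phi> (q ^ k * Z)" for k
  proof -
    have "\<Phi> Z * \<Psi> (q ^ k * Z) * qpoch Z q k = qpoch (g * Z) q k * \<Phi> (q ^ k * Z) * \<Psi> (q ^ k * Z)"
      using q_difference_iterate[of \<Phi>, OF \<Phi> q Z] by (simp add: ac_simps)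
    also have "\<dots> = \<Psi> Z * \<Phi> (q ^ k * Z) * qpoch Z q k"
      using q_difference_iterate[of \<Psi>, OF \<Psi> q Z] by (simp add: ac_simps)
    finally show ?thesis
      using qpoch_nonzero[of q Z k] q Z by simp
  qed
  moreover have "(\<lambda>k. \<Phi> Z * \<Psi> (q ^ k * Z)) \<longlonglongrightarrow> \<Phi> Z * 1"
    by (intro tendsto_intros \<Psi>_lim)
  moreover have "(\<lambda>k. \<Psi> Z * \<Phi> (q ^ k * Z)) \<longlonglongrightarrow> \<Psi> Z * 1"
    by (intro tendsto_intros \<Phi>_lim)
  ultimately show ?thesis
    using LIMSEQ_unique by fastforce
qed

lemma sums_eq_if_telescoping:
  fixes R :: "nat \<Rightarrow> 'a::real_normed_vector"
  assumes "f sums s" and "h sums t" and "\<And>n. f n - h n = R n - R (Suc n)"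
    and "R \<longlonglongrightarrow> 0" and "R 0 = 0"
  shows "s = t"
proof -
  have "(\<lambda>n. f n - h n) sums (s - t)"
    using assms(1,2) by (rule sums_diff)
  moreover have "(\<lambda>n. f n - h n) sums 0"
    using telescope_sums'[OF assms(4)] assms(3,5) by simp
  ultimately show ?thesis
    using sums_unique2 by fastforce
qed

lemma qphi_term_1_0: "qphi_term [a] [] q Z j = qpoch a q j / qpoch q q j * Z ^ j"
  by (simp add: qphi_term_def qpochs_def)

lemma summable_norm_qphi_1_0:
  "norm q < 1 \<Longrightarrow> norm Z < 1 \<Longrightarrow> summable (\<lambda>j. norm (qphi_term [a] [] q Z j))"
  by (rule summable_norm_qphi_term) (simp_all add: qpochs_def)

lemma qbinomial_difference_equation:
  assumes q: "norm q < 1" and Z: "norm Z < 1"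
  shows "(1 - Z) * qphi [g] [] q Z = (1 - g * Z) * qphi [g] [] q (q * Z)"
proof (rule sums_eq_if_telescoping[where R = "\<lambda>j. (1 - q ^ j) * qphi_term [g] [] q Z j"])
  have qZ: "norm (q * Z) < 1"
    using norm_power_mult_less_1[OF q Z, of 1] by simp
  show "(\<lambda>j. (1 - Z) * qphi_term [g] [] q Z j) sums ((1 - Z) * qphi [g] [] q Z)"
    "(\<lambda>j. (1 - g * Z) * qphi_term [g] [] q (q * Z) j) sums ((1 - g * Z) * qphi [g] [] q (q * Z))"
    unfolding qphi_def
    by (intro sums_mult summable_sums summable_norm_cancel[OF summable_norm_qphi_1_0] q Z qZ)+
  show "(1 - Z) * qphi_term [g] [] q Z j - (1 - g * Z) * qphi_term [g] [] q (q * Z) j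
        = (1 - q ^ j) * qphi_term [g] [] q Z j - (1 - q ^ Suc j) * qphi_term [g] [] q Z (Suc j)" for j
  proof -
    have "qphi_term [g] [] q (q * Z) j = qphi_term [g] [] q Z j * q ^ j"
      using qphi_term_mult_power[of "[g]" "[]" q Z q j] by (simp add: mult.commute)
    thus ?thesis
      using one_minus_q_power_Suc_nonzero[OF q, of j] by (simp add: qphi_term_Suc field_simps)
  qed
  have "(\<lambda>j. (1 - q ^ j) * qphi_term [g] [] q Z j) \<longlonglongrightarrow> (1 - 0) * 0"
    by (intro tendsto_intros LIMSEQ_power_zero q summable_LIMSEQ_zero
        summable_norm_cancel[OF summable_norm_qphi_1_0[OF q Z]])
  thus "(\<lambda>j. (1 - q ^ j) * qphi_term [g] [] q Z j) \<longlonglongrightarrow> 0"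
    by simp
qed simp

lemma qbinomial_LIMSEQ_1:
  assumes q: "norm q < 1" and Z: "norm Z < 1"
  shows "(\<lambda>k. qphi [g] [] q (q ^ k * Z)) \<longlonglongrightarrow> 1"
proof -
  let ?c = "\<lambda>j. qpoch g q j / qpoch q q j"
  have "summable (\<lambda>j. ?c j * (1/2) ^ j)"
    using summable_norm_cancel[OF summable_norm_qphi_1_0[OF q, of "1/2" g]]
    by (simp add: qphi_term_1_0)
  hence "isCont (\<lambda>W. \<Sum>j. ?c j * W ^ j) 0"
    by (rule isCont_powser) simp
  moreover have "(\<lambda>k. q ^ k * Z) \<longlonglongrightarrow> 0"
    using tendsto_mult_left_zero[OF LIMSEQ_power_zero[OF q], of Z] .
  ultimately have "(\<lambda>k. \<Sum>j. ?c j * (q ^ k * Z) ^ j) \<longlonglongrightarrow> (\<Sum>j. ?c j * 0 ^ j)"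
    using isCont_tendsto_compose by blast
  moreover have "(\<Sum>j. ?c j * 0 ^ j) = 1"
    by (simp only: powser_zero) simp
  ultimately show ?thesis
    by (simp add: qphi_def qphi_term_1_0)
qed

definition expansion_coeff :: "complex \<Rightarrow> complex \<Rightarrow> complex \<Rightarrow> nat \<Rightarrow> complex" where
  "expansion_coeff q g W n = qpochs [g * q, g * W] q n / qpochs [q, W] q n * W ^ n * q ^ (n * (n - 1))"

text \<open>\<open>expansion_term q (A * B / C) z n\<close> is the coefficient of the \<open>n\<close>-th \<open>\<^sub>4\<phi>\<^sub>3\<close> in the theorem.\<close>
definition expansion_term :: "complex \<Rightarrow> complex \<Rightarrow> complex \<Rightarrow> nat \<Rightarrow> complex" where
  "expansion_term q g W n = expansion_coeff q g W n * (1 - g * W * q ^ (2 * n))"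

definition expansion_majorant :: "complex \<Rightarrow> complex \<Rightarrow> real \<Rightarrow> nat \<Rightarrow> real" where
  "expansion_majorant q g \<rho> n =
     ((1 + norm g) ^ 2 / ((1 - norm q) * (1 - \<rho>))) ^ n * norm q ^ (n * (n - 1))"

lemma Suc_times_pred: "Suc n * (Suc n - 1) = n * (n - 1) + 2 * n"
  by (cases n) (simp_all add: algebra_simps)

lemma expansion_coeff_Suc:
  "expansion_coeff q g W (Suc n) = (1 - g * q * q ^ n) * (1 - g * W * q ^ n)
     / ((1 - q * q ^ n) * (1 - W * q ^ n)) * W * q ^ (2 * n) * expansion_coeff q g W n"
  unfolding expansion_coeff_def qpochs_Suc Suc_times_pred power_add power_Suc
  by (simp only: list.map prod_list.Cons prod_list.Nil mult_1_right divide_inverse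
      inverse_mult_distrib mult_ac) simp

lemma expansion_coeff_shift:
  assumes q: "norm q < 1" and W: "norm W < 1"
  shows "(1 - g * W) * (1 - W * q ^ n) * expansion_coeff q g (q * W) n
           = (1 - W) * q ^ n * (1 - g * W * q ^ n) * expansion_coeff q g W n"
proof -
  have qW: "norm (W * q) < 1"
    using norm_power_mult_less_1[OF q W, of 1] by (simp add: mult.commute)
  have num: "(1 - g * W) * qpoch (g * W * q) q n = qpoch (g * W) q n * (1 - g * W * q ^ n)"
    by (metis qpoch_Suc qpoch_Suc_shift)
  have den: "(1 - W) * qpoch (W * q) q n = qpoch W q n * (1 - W * q ^ n)"
    by (metis qpoch_Suc qpoch_Suc_shift)
  have nonzero: "qpoch W q n \<noteq> 0" "qpoch (W * q) q n \<noteq> 0" "qpoch q q n \<noteq> 0"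
    using qpoch_nonzero q W qW by auto
  have den': "(1 - W * q ^ n) / qpoch (W * q) q n = (1 - W) / qpoch W q n"
    using den nonzero by (simp add: field_simps)
  have "expansion_coeff q g (q * W) n
      = qpoch (g * q) q n / qpoch q q n * qpoch (g * W * q) q n / qpoch (W * q) q n * (q ^ n * W ^ n)
        * q ^ (n * (n - 1))"
  proof -
    have "g * (q * W) = g * W * q" "q * W = W * q"
      by (simp_all add: ac_simps)
    thus ?thesis
      unfolding expansion_coeff_def qpochs_def
      by (simp only: list.map prod_list.Cons prod_list.Nil mult_1_right power_mult_distrib
          divide_inverse inverse_mult_distrib mult_ac) simp
  qed
  hence "(1 - g * W) * (1 - W * q ^ n) * expansion_coeff q g (q * W) n
      = qpoch (g * q) q n / qpoch q q n * ((1 - g * W) * qpoch (g * W * q) q n)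
        * ((1 - W * q ^ n) / qpoch (W * q) q n) * (q ^ n * W ^ n) * q ^ (n * (n - 1))"
    by (simp only: divide_inverse mult_ac)
  also have "\<dots> = (1 - W) * q ^ n * (1 - g * W * q ^ n) * expansion_coeff q g W n"
    unfolding num den' expansion_coeff_def qpochs_def
    by (simp only: list.map prod_list.Cons prod_list.Nil mult_1_right divide_inverse
        inverse_mult_distrib mult_ac) simp
  finally show ?thesis .
qed

lemma expansion_majorant_nonneg:
  "norm q < 1 \<Longrightarrow> \<rho> < 1 \<Longrightarrow> 0 \<le> expansion_majorant q g \<rho> n"
  by (simp add: expansion_majorant_def)

lemma summable_expansion_majorant:
  assumes q: "norm q < 1"
  shows "summable (expansion_majorant q g \<rho>)"
proof -
  define K where "K = (1 + norm g) ^ 2 / ((1 - norm q) * (1 - \<rho>))"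
  have "summable (\<lambda>n. norm (expansion_majorant q g \<rho> n))"
  proof (rule summable_norm_if_ratio_LIMSEQ)
    show "expansion_majorant q g \<rho> (Suc n) = K * (norm q ^ 2) ^ n * expansion_majorant q g \<rho> n" for n
      unfolding expansion_majorant_def K_def[symmetric] Suc_times_pred
      by (simp add: power_add power_mult power2_eq_square power_mult_distrib ac_simps)
    have "(\<lambda>n. K * (norm q ^ 2) ^ n) \<longlonglongrightarrow> K * 0"
      using q by (intro tendsto_intros LIMSEQ_power_zero) (simp add: power_less_one_iff abs_square_less_1)
    thus "(\<lambda>n. K * (norm q ^ 2) ^ n) \<longlonglongrightarrow> 0"
      by simp
  qed simp
  thus ?thesis
    by (rule summable_norm_cancel)
qed

lemma norm_expansion_coeff_le:
  assumes q: "norm q < 1" and W: "norm W \<le> \<rho>" "\<rho> < 1"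
  shows "norm (expansion_coeff q g W n) \<le> expansion_majorant q g \<rho> n"
proof -
  have W1: "norm W < 1"
    using W by simp
  have "norm (qpoch (g * c) q n) \<le> (1 + norm g) ^ n" if "norm c \<le> 1" for c
  proof -
    have "norm (qpoch (g * c) q n) \<le> (1 + norm (g * c)) ^ n"
      using q by (intro norm_qpoch_le) simp
    also have "\<dots> \<le> (1 + norm g) ^ n"
      using that by (intro power_mono) (simp_all add: norm_mult mult_left_le)
    finally show ?thesis .
  qed
  hence "norm (qpoch (g * q) q n) * norm (qpoch (g * W) q n) \<le> (1 + norm g) ^ n * (1 + norm g) ^ n"
    using q W1 by (intro mult_mono) auto
  hence num: "norm (qpoch (g * q) q n * qpoch (g * W) q n) \<le> ((1 + norm g) ^ 2) ^ n"
    by (simp add: norm_mult power2_eq_square power_mult_distrib)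
  have "(1 - norm q) ^ n \<le> norm (qpoch q q n)"
    using q by (intro norm_qpoch_ge) auto
  moreover have "(1 - \<rho>) ^ n \<le> (1 - norm W) ^ n"
    using W by (intro power_mono) auto
  hence "(1 - \<rho>) ^ n \<le> norm (qpoch W q n)"
    using q W1 norm_qpoch_ge[of q W n] by simp
  ultimately have den: "((1 - norm q) * (1 - \<rho>)) ^ n \<le> norm (qpoch q q n * qpoch W q n)"
    using q W by (simp add: norm_mult power_mult_distrib mult_mono)
  have "norm (expansion_coeff q g W n)
      = norm (qpoch (g * q) q n * qpoch (g * W) q n) / norm (qpoch q q n * qpoch W q n)
        * norm W ^ n * norm q ^ (n * (n - 1))"
    by (simp add: expansion_coeff_def qpochs_def norm_mult norm_divide norm_power)
  also have "\<dots> \<le> ((1 + norm g) ^ 2) ^ n / ((1 - norm q) * (1 - \<rho>)) ^ n * 1 * norm q ^ (n * (n - 1))"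
    using q W by (intro mult_mono frac_le num den power_le_one) auto
  also have "\<dots> = expansion_majorant q g \<rho> n"
    by (simp add: expansion_majorant_def power_divide)
  finally show ?thesis .
qed

lemma norm_expansion_term_le:
  assumes q: "norm q < 1" and W: "norm W \<le> \<rho>" "\<rho> < 1"
  shows "norm (expansion_term q g W n) \<le> (1 + norm g) * expansion_majorant q g \<rho> n"
proof -
  have "norm W * norm q ^ (2 * n) \<le> 1"
    using q W by (intro mult_le_one power_le_one) auto
  hence "norm (g * W * q ^ (2 * n)) \<le> norm g"
    by (simp add: norm_mult norm_power mult_left_le mult.assoc)
  hence "norm (1 - g * W * q ^ (2 * n)) \<le> 1 + norm g"
    using norm_triangle_ineq4[of 1 "g * W * q ^ (2 * n)"] by simp
  moreover have "norm (expansion_coeff q g W n) \<le> expansion_majorant q g \<rho> n"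
    by (rule norm_expansion_coeff_le[OF assms])
  ultimately have "norm (expansion_coeff q g W n) * norm (1 - g * W * q ^ (2 * n))
      \<le> expansion_majorant q g \<rho> n * (1 + norm g)"
    by (intro mult_mono) (auto intro: order_trans[OF norm_ge_zero])
  thus ?thesis
    by (simp add: expansion_term_def norm_mult mult.commute)
qed

lemma summable_norm_expansion_term:
  assumes q: "norm q < 1" and W: "norm W < 1"
  shows "summable (\<lambda>n. norm (expansion_term q g W n))"
  by (rule summable_comparison_test[OF _ summable_mult[OF summable_expansion_majorant[OF q]]])
     (use norm_expansion_term_le[OF q order.refl W] in auto)

lemma expansion_coeff_eq:
  "expansion_coeff q g W n
     = qpoch (g * q) q n * qpoch (g * W) q n / (qpoch q q n * qpoch W q n) * W ^ n * q ^ (n * (n - 1))"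
  by (simp add: expansion_coeff_def qpochs_def)

lemma expansion_coeff_LIMSEQ_0:
  assumes q: "norm q < 1" and W: "norm W < 1"
  shows "expansion_coeff q g W \<longlonglongrightarrow> 0"
proof (rule Lim_null_comparison)
  show "\<forall>\<^sub>F n in sequentially. norm (expansion_coeff q g W n) \<le> expansion_majorant q g (norm W) n"
    using norm_expansion_coeff_le[OF q order.refl W] by simp
  show "expansion_majorant q g (norm W) \<longlonglongrightarrow> 0"
    by (rule summable_LIMSEQ_zero[OF summable_expansion_majorant[OF q]])
qed

lemma expansion_term_telescoping:
  assumes q: "norm q < 1" and Z: "norm Z < 1"
  shows "(1 - Z) * expansion_term q g Z n - (1 - g * Z) * expansion_term q g (q * Z) n
      = (1 - Z) * (1 - q ^ n) * expansion_coeff q g Z n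
        - (1 - Z) * (1 - q ^ Suc n) * expansion_coeff q g Z (Suc n)"
proof -
  define t where "t = q ^ n"
  define u where "u = expansion_coeff q g Z n"
  have q2n: "q ^ (2 * n) = t ^ 2"
    by (simp add: t_def power_mult mult.commute[of 2 n])
  have nonzero: "1 - q * t \<noteq> 0" "1 - Z * t \<noteq> 0"
    using one_minus_q_power_Suc_nonzero[OF q, of n] qpoch_nonzero[OF _ Z, of q "Suc n"] q
    by (auto simp: t_def qpoch_Suc)
  have "(1 - g * Z) * expansion_term q g (q * Z) n
      = ((1 - g * Z) * expansion_coeff q g (q * Z) n) * (1 - g * q * Z * t ^ 2)"
    unfolding expansion_term_def q2n by (simp add: ac_simps)
  also have "(1 - g * Z) * expansion_coeff q g (q * Z) n = (1 - Z) * t * (1 - g * Z * t) / (1 - Z * t) * u"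
    using expansion_coeff_shift[OF q Z, of g n] nonzero
    by (simp add: t_def u_def field_simps)
  finally have shift: "(1 - g * Z) * expansion_term q g (q * Z) n
      = (1 - Z) * t * (1 - g * Z * t) / (1 - Z * t) * u * (1 - g * q * Z * t ^ 2)" .
  have Suc: "expansion_coeff q g Z (Suc n)
      = (1 - g * q * t) * (1 - g * Z * t) / ((1 - q * t) * (1 - Z * t)) * Z * t ^ 2 * u"
    by (simp add: expansion_coeff_Suc q2n t_def u_def)
  have "(1 - Z) * expansion_term q g Z n - (1 - g * Z) * expansion_term q g (q * Z) n
      = (1 - Z) * u * (1 - g * Z * t ^ 2)
        - (1 - Z) * t * (1 - g * Z * t) / (1 - Z * t) * u * (1 - g * q * Z * t ^ 2)"
    unfolding shift by (simp add: expansion_term_def q2n u_def)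
  also have "\<dots> = (1 - Z) * (1 - t) * u - (1 - Z) * (1 - q * t)
      * ((1 - g * q * t) * (1 - g * Z * t) / ((1 - q * t) * (1 - Z * t)) * Z * t ^ 2 * u)"
    using nonzero by (simp add: divide_simps) algebra
  finally show ?thesis
    unfolding Suc by (simp add: t_def u_def)
qed

lemma expansion_difference_equation:
  assumes q: "norm q < 1" and Z: "norm Z < 1"
  shows "(1 - Z) * (\<Sum>n. expansion_term q g Z n) = (1 - g * Z) * (\<Sum>n. expansion_term q g (q * Z) n)"
proof (rule sums_eq_if_telescoping[where R = "\<lambda>n. (1 - Z) * (1 - q ^ n) * expansion_coeff q g Z n"])
  have qZ: "norm (q * Z) < 1"
    using norm_power_mult_less_1[OF q Z, of 1] by simp
  show "(\<lambda>n. (1 - Z) * expansion_term q g Z n) sums ((1 - Z) * (\<Sum>n. expansion_term q g Z n))"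
    "(\<lambda>n. (1 - g * Z) * expansion_term q g (q * Z) n)
       sums ((1 - g * Z) * (\<Sum>n. expansion_term q g (q * Z) n))"
    by (intro sums_mult summable_sums summable_norm_cancel[OF summable_norm_expansion_term] q Z qZ)+
  show "(1 - Z) * expansion_term q g Z n - (1 - g * Z) * expansion_term q g (q * Z) n
      = (1 - Z) * (1 - q ^ n) * expansion_coeff q g Z n
        - (1 - Z) * (1 - q ^ Suc n) * expansion_coeff q g Z (Suc n)" for n
    by (rule expansion_term_telescoping[OF q Z])
  have "(\<lambda>n. (1 - Z) * (1 - q ^ n) * expansion_coeff q g Z n) \<longlonglongrightarrow> (1 - Z) * (1 - 0) * 0"
    by (intro tendsto_intros LIMSEQ_power_zero expansion_coeff_LIMSEQ_0 q Z)
  thus "(\<lambda>n. (1 - Z) * (1 - q ^ n) * expansion_coeff q g Z n) \<longlonglongrightarrow> 0"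
    by simp
qed simp

lemma expansion_LIMSEQ_1:
  assumes q: "norm q < 1" and Z: "norm Z < 1"
  shows "(\<lambda>k. \<Sum>n. expansion_term q g (q ^ k * Z) n) \<longlonglongrightarrow> 1"
proof -
  have W0: "(\<lambda>k. q ^ k * Z) \<longlonglongrightarrow> 0"
    using tendsto_mult_left_zero[OF LIMSEQ_power_zero[OF q], of Z] .
  have "(\<lambda>k. expansion_term q g (q ^ k * Z) n) \<longlonglongrightarrow> expansion_term q g 0 n" for n
    unfolding expansion_term_def expansion_coeff_eq
    by (intro tendsto_intros qpoch_tendsto W0) (simp add: qpoch_q_nonzero[OF q])
  moreover have "norm (expansion_term q g (q ^ k * Z) n) \<le> (1 + norm g) * expansion_majorant q g (norm Z) n"
    for k n
    using norm_expansion_term_le[OF q norm_power_mult_le Z] q by simp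
  ultimately have "(\<lambda>k. \<Sum>n. expansion_term q g (q ^ k * Z) n) \<longlonglongrightarrow> (\<Sum>n. expansion_term q g 0 n)"
    using tannerys_theorem[of "\<lambda>n k. expansion_term q g (q ^ k * Z) n" "expansion_term q g 0"
        sequentially "\<lambda>n. (1 + norm g) * expansion_majorant q g (norm Z) n"]
      summable_mult[OF summable_expansion_majorant[OF q]]
    by (auto intro: always_eventually)
  moreover have "expansion_term q g 0 = (\<lambda>n. if n = 0 then 1 else 0)"
    by (auto simp: fun_eq_iff expansion_term_def expansion_coeff_eq)
  ultimately show ?thesis
    using sums_single[of 0 "\<lambda>_. 1::complex"] by (simp add: sums_iff)
qed

theorem qbinomial_eq_expansion:
  assumes "norm q < 1" and "norm Z < 1"
  shows "qphi [g] [] q Z = (\<Sum>n. expansion_term q g Z n)"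
  using assms
  by (intro q_difference_solution_unique[where \<Phi> = "qphi [g] [] q" and g = g])
     (auto intro: qbinomial_difference_equation expansion_difference_equation
        qbinomial_LIMSEQ_1 expansion_LIMSEQ_1)

section \<open>Euler's transformation\<close>

lemma convolution_partial_sum_step:
  fixes A B C g p0 p1 q r t u :: complex
  assumes P: "p1 * (1 - q * u) = p0 * (1 - g * u)" and u: "1 - q * u \<noteq> 0"
    and g: "g = A * B / C" and nonzero: "A \<noteq> 0" "B \<noteq> 0" "C \<noteq> 0"
  shows "- q * u * p1 * r * (1 - q * t) * (1 - C * t)
           + ((1 - q * (u * (q * t))) * (1 - C * (u * (q * t))) * p1
              - (1 - A * (u * (q * t))) * (1 - B * (u * (q * t))) * p0) * r
       = - u * p0 * r * (1 - C / A * (q * t)) * (1 - C / B * (q * t)) * g"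
proof -
  have "p1 = p0 * (1 - g * u) / (1 - q * u)"
    using P u by (simp add: field_simps)
  thus ?thesis
    using u nonzero by (simp add: g field_simps) algebra
qed

text \<open>\<open>P\<close> and \<open>Q\<close> are the coefficient sequences of \<open>\<^sub>1\<phi>\<^sub>0(g; q, W)\<close> and
  \<open>\<^sub>2\<phi>\<^sub>1(C/A, C/B; C; q, gW)\<close>, given by their recurrences.\<close>
context
  fixes A B C g q :: complex and P Q :: "nat \<Rightarrow> complex"
  assumes P: "\<And>j. P (Suc j) * (1 - q * q ^ j) = P j * (1 - g * q ^ j)"
    and Q: "\<And>k. Q (Suc k) * (1 - q * q ^ k) * (1 - C * q ^ k)
                 = Q k * (1 - C / A * q ^ k) * (1 - C / B * q ^ k) * g"
    and g: "g = A * B / C" and nonzero: "A \<noteq> 0" "B \<noteq> 0" "C \<noteq> 0" "\<And>j. 1 - q * q ^ j \<noteq> 0"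
begin

text \<open>The right-hand side is the telescoping certificate for the recurrence of the convolution
  of \<open>P\<close> and \<open>Q\<close>.\<close>
lemma convolution_partial_sum:
  shows "M \<le> N \<Longrightarrow>
    (\<Sum>k\<le>M. ((1 - q * q ^ N) * (1 - C * q ^ N) * P (Suc N - k) - (1 - A * q ^ N) * (1 - B * q ^ N) * P (N - k)) * Q k)
      = - (q ^ (N - M) * P (N - M) * Q (Suc M) * (1 - q * q ^ M) * (1 - C * q ^ M))"
proof (induction M)
  case 0
  define u where "u = q ^ N"
  have P0: "(1 - q * u) * P (Suc N) = (1 - g * u) * P N"
    using P[of N] by (simp add: u_def mult.commute)
  have poly: "(1 - C * u) * (1 - g * u) - (1 - A * u) * (1 - B * u) = - u * (1 - C / A) * (1 - C / B) * g"
    using nonzero by (simp add: g field_simps)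
  have "(1 - q * u) * (1 - C * u) * P (Suc N) - (1 - A * u) * (1 - B * u) * P N
      = (1 - C * u) * ((1 - q * u) * P (Suc N)) - (1 - A * u) * (1 - B * u) * P N"
    by (simp add: ac_simps)
  also have "\<dots> = P N * ((1 - C * u) * (1 - g * u) - (1 - A * u) * (1 - B * u))"
    unfolding P0 by (simp add: algebra_simps)
  also have "\<dots> = - (u * P N * (1 - C / A) * (1 - C / B) * g)"
    unfolding poly by (simp add: algebra_simps)
  finally show ?case
    using Q[of 0] by (simp add: u_def ac_simps)
next
  case (Suc M)
  define m where "m = N - Suc M"
  define u t where "u = q ^ m" and "t = q ^ M"
  have N: "N - M = Suc m" "Suc N - Suc M = Suc m" "N - Suc M = m" and qN: "q ^ N = u * (q * t)"
    using Suc.prems by (simp_all add: m_def u_def t_def flip: power_add power_Suc)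
  have "- q * u * P (Suc m) * Q (Suc M) * (1 - q * t) * (1 - C * t)
        + ((1 - q * (u * (q * t))) * (1 - C * (u * (q * t))) * P (Suc m)
           - (1 - A * (u * (q * t))) * (1 - B * (u * (q * t))) * P m) * Q (Suc M)
      = - u * P m * Q (Suc M) * (1 - C / A * (q * t)) * (1 - C / B * (q * t)) * g"
    using P[of m] nonzero(4)[of m] unfolding u_def[symmetric]
    by (intro convolution_partial_sum_step[OF _ _ g nonzero(1-3)]) (simp_all add: ac_simps)
  also have "\<dots> = - (u * P m * (Q (Suc (Suc M)) * (1 - q * (q * t)) * (1 - C * (q * t))))"
    using Q[of "Suc M"] by (simp add: t_def ac_simps)
  finally show ?case
    using Suc by (simp add: N qN u_def t_def ac_simps)
qed

lemma convolution_recurrence: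
  assumes "P 0 = 1"
  shows "(1 - q * q ^ N) * (1 - C * q ^ N) * (\<Sum>k\<le>Suc N. P (Suc N - k) * Q k)
       = (1 - A * q ^ N) * (1 - B * q ^ N) * (\<Sum>k\<le>N. P (N - k) * Q k)"
proof -
  define c1 c2 where "c1 = (1 - q * q ^ N) * (1 - C * q ^ N)" and "c2 = (1 - A * q ^ N) * (1 - B * q ^ N)"
  have "c1 * (\<Sum>k\<le>N. P (Suc N - k) * Q k) - c2 * (\<Sum>k\<le>N. P (N - k) * Q k)
      = (\<Sum>k\<le>N. (c1 * P (Suc N - k) - c2 * P (N - k)) * Q k)"
    by (simp add: sum_distrib_left sum_subtractf algebra_simps)
  also have "\<dots> = - (c1 * Q (Suc N))"
    using convolution_partial_sum[OF order.refl] \<open>P 0 = 1\<close>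
    by (simp add: c1_def c2_def ac_simps)
  finally have "c1 * ((\<Sum>k\<le>N. P (Suc N - k) * Q k) + Q (Suc N)) = c2 * (\<Sum>k\<le>N. P (N - k) * Q k)"
    by (simp add: algebra_simps)
  thus ?thesis
    using \<open>P 0 = 1\<close> by (simp add: c1_def c2_def)
qed

end

lemma qphi_term_Suc_mult:
  assumes "(1 - q * q ^ k) * (\<Prod>b\<leftarrow>bs. 1 - b * q ^ k) \<noteq> 0"
  shows "qphi_term as bs q w (Suc k) * ((1 - q * q ^ k) * (\<Prod>b\<leftarrow>bs. 1 - b * q ^ k))
           = (\<Prod>a\<leftarrow>as. 1 - a * q ^ k) * w * qphi_term as bs q w k"
  using assms by (simp add: qphi_term_Suc)

lemma qphi_term_convolution:
  assumes q: "norm q < 1" and nonzero: "A \<noteq> 0" "B \<noteq> 0" "C \<noteq> 0" and C: "\<And>n. qpoch C q n \<noteq> 0"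
  shows "(\<Sum>k\<le>N. qphi_term [A * B / C] [] q 1 (N - k) * qphi_term [C / A, C / B] [C] q (A * B / C) k)
       = qphi_term [A, B] [C] q 1 N"
proof (induction N)
  case (Suc N)
  have q_nonzero: "1 - q * q ^ j \<noteq> 0" for j
    by (rule one_minus_q_power_Suc_nonzero[OF q])
  have C_nonzero: "1 - C * q ^ j \<noteq> 0" for j
    using C[of "Suc j"] by (simp add: qpoch_Suc)
  have rec: "(1 - q * q ^ N) * (1 - C * q ^ N)
      * (\<Sum>k\<le>Suc N. qphi_term [A * B / C] [] q 1 (Suc N - k) * qphi_term [C / A, C / B] [C] q (A * B / C) k)
    = (1 - A * q ^ N) * (1 - B * q ^ N)
      * (\<Sum>k\<le>N. qphi_term [A * B / C] [] q 1 (N - k) * qphi_term [C / A, C / B] [C] q (A * B / C) k)"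
  proof (rule convolution_recurrence[OF _ _ refl nonzero q_nonzero])
    show "qphi_term [A * B / C] [] q 1 (Suc j) * (1 - q * q ^ j)
        = qphi_term [A * B / C] [] q 1 j * (1 - A * B / C * q ^ j)" for j
      using qphi_term_Suc_mult[of q j "[]" "[A * B / C]" 1] q_nonzero by (simp add: ac_simps)
    show "qphi_term [C / A, C / B] [C] q (A * B / C) (Suc k) * (1 - q * q ^ k) * (1 - C * q ^ k)
        = qphi_term [C / A, C / B] [C] q (A * B / C) k * (1 - C / A * q ^ k) * (1 - C / B * q ^ k)
          * (A * B / C)" for k
      using qphi_term_Suc_mult[of q k "[C]" "[C / A, C / B]" "A * B / C"] q_nonzero C_nonzero
      by (simp add: ac_simps)
  qed simp
  have "qphi_term [A, B] [C] q 1 (Suc N) * ((1 - q * q ^ N) * (1 - C * q ^ N))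
      = (1 - A * q ^ N) * (1 - B * q ^ N) * qphi_term [A, B] [C] q 1 N"
    using qphi_term_Suc_mult[of q N "[C]" "[A, B]" 1] q_nonzero C_nonzero by (simp add: ac_simps)
  with rec have "((1 - q * q ^ N) * (1 - C * q ^ N)) * qphi_term [A, B] [C] q 1 (Suc N)
      = ((1 - q * q ^ N) * (1 - C * q ^ N))
        * (\<Sum>k\<le>Suc N. qphi_term [A * B / C] [] q 1 (Suc N - k) * qphi_term [C / A, C / B] [C] q (A * B / C) k)"
    unfolding Suc.IH by (simp only: mult.commute)
  thus ?case
    using q_nonzero[of N] C_nonzero[of N] by simp
qed simp

theorem qphi_2_1_Euler_transformation:
  assumes q: "norm q < 1" and z: "norm z < 1"
    and nonzero: "A \<noteq> 0" "B \<noteq> 0" "C \<noteq> 0" and C: "\<And>n. qpoch C q n \<noteq> 0"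
    and summable: "summable (\<lambda>k. norm (qphi_term [C / A, C / B] [C] q (A * B * z / C) k))"
  shows "qphi [A, B] [C] q z = qphi [A * B / C] [] q z * qphi [C / A, C / B] [C] q (A * B * z / C)"
proof -
  have "qphi_term [A * B / C] [] q z i * qphi_term [C / A, C / B] [C] q (A * B * z / C) (N - i)
      = qphi_term [A * B / C] [] q 1 i * qphi_term [C / A, C / B] [C] q (A * B / C) (N - i) * z ^ N"
    if "i \<le> N" for i N
    using qphi_term_mult_power[of "[A * B / C]" "[]" q 1 z i]
      qphi_term_mult_power[of "[C / A, C / B]" "[C]" q "A * B / C" z "N - i"] that
    by (simp add: power_add[symmetric])
  hence "(\<Sum>i\<le>N. qphi_term [A * B / C] [] q z i * qphi_term [C / A, C / B] [C] q (A * B * z / C) (N - i))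
      = (\<Sum>k\<le>N. qphi_term [A * B / C] [] q 1 (N - k) * qphi_term [C / A, C / B] [C] q (A * B / C) k) * z ^ N"
    for N
    by (simp add: sum_distrib_right)
       (rule sum.reindex_bij_witness[of _ "\<lambda>k. N - k" "\<lambda>k. N - k"]; auto)
  also have "\<dots> N = qphi_term [A, B] [C] q z N" for N
    using qphi_term_convolution[OF q nonzero C] qphi_term_mult_power[of "[A, B]" "[C]" q 1 z N] by simp
  finally show ?thesis
    unfolding qphi_def
    using Cauchy_product[OF summable_norm_qphi_1_0[OF q z] summable] by simp
qed

section \<open>Rearranging the double series\<close>

lemma expansion_term_mult_qphi_term:
  fixes a b C g q z :: complex
  defines "x \<equiv> g * z"
  assumes x_nonzero: "qpoch (x * q ^ (2 * n)) q k \<noteq> 0"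
  shows "expansion_term q g z n
           * qphi_term [x * q ^ n, x * q ^ (2 * n + 1), a, b] [C, z * q ^ n, x * q ^ (2 * n)] q (x * q ^ n) k
       = qphi_term [a, b, x] [C, z] q x k * expansion_term q g (q ^ k * z) n"
proof -
  have x: "qpoch x q n * qpoch (x * q ^ n) q k = qpoch x q k * qpoch (x * q ^ k) q n"
    by (metis add.commute qpoch_add)
  have z: "qpoch z q n * qpoch (z * q ^ n) q k = qpoch z q k * qpoch (z * q ^ k) q n"
    by (metis add.commute qpoch_add)
  have end_factor: "(1 - x * q ^ (2 * n)) * qpoch (x * q ^ (2 * n + 1)) q k / qpoch (x * q ^ (2 * n)) q k
      = 1 - x * q ^ (2 * n + k)"
  proof -
    have "(1 - x * q ^ (2 * n)) * qpoch (x * q ^ (2 * n + 1)) q k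
        = qpoch (x * q ^ (2 * n)) q k * (1 - x * q ^ (2 * n + k))"
      by (metis qpoch_Suc qpoch_Suc_shift mult.assoc power_add power_one_right)
    thus ?thesis
      using x_nonzero by simp
  qed
  define c where "c = qpoch (g * q) q n * qpoch a q k * qpoch b q k * x ^ k * q ^ (n * k) * z ^ n
      * q ^ (n * (n - 1)) / (qpoch q q n * qpoch q q k * qpoch C q k)"
  have "expansion_term q g z n
          * qphi_term [x * q ^ n, x * q ^ (2 * n + 1), a, b] [C, z * q ^ n, x * q ^ (2 * n)] q (x * q ^ n) k
      = c * (qpoch x q n * qpoch (x * q ^ n) q k / (qpoch z q n * qpoch (z * q ^ n) q k))
          * ((1 - x * q ^ (2 * n)) * qpoch (x * q ^ (2 * n + 1)) q k / qpoch (x * q ^ (2 * n)) q k)"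
    by (simp add: expansion_term_def expansion_coeff_eq qphi_term_def qpochs_def c_def x_def
        power_mult_distrib power_mult[symmetric] divide_inverse ac_simps)
  also have "\<dots> = c * (qpoch x q k * qpoch (x * q ^ k) q n / (qpoch z q k * qpoch (z * q ^ k) q n))
          * (1 - x * q ^ (2 * n + k))"
    unfolding x z end_factor ..
  also have "\<dots> = qphi_term [a, b, x] [C, z] q x k * expansion_term q g (q ^ k * z) n"
    by (simp add: expansion_term_def expansion_coeff_eq qphi_term_def qpochs_def c_def x_def
        power_mult_distrib power_mult[symmetric] power_add divide_inverse ac_simps)
  finally show ?thesis .
qed

text \<open>The hypothesis is the \<open>\<^sub>4\<phi>\<^sub>3\<close> of the theorem for \<open>n = 0\<close>. It forces the
  \<open>\<^sub>2\<phi>\<^sub>1\<close> either to terminate or to have \<open>norm x < 1\<close>, a bound the theorem does not assume.\<close>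
lemma summable_norm_terms_if_summable_4_3:
  fixes a b C x q z :: complex
  assumes q: "norm q < 1" and C: "\<And>n. qpoch C q n \<noteq> 0" and z: "\<And>n. qpoch z q n \<noteq> 0"
    and x: "\<And>n. qpoch x q n \<noteq> 0"
    and summable: "summable (qphi_term [x, x * q, a, b] [C, z, x] q x)"
  shows "summable (\<lambda>k. norm (qphi_term [a, b] [C] q x k))"
    and "summable (\<lambda>k. norm (qphi_term [a, b, x] [C, z] q x k))"
proof -
  have "summable (\<lambda>k. norm (qphi_term [a, b] [C] q x k))
      \<and> summable (\<lambda>k. norm (qphi_term [a, b, x] [C, z] q x k))"
  proof (cases "\<exists>i. 1 - a * q ^ i = 0 \<or> 1 - b * q ^ i = 0")
    case True
    then obtain i where i: "1 - a * q ^ i = 0 \<or> 1 - b * q ^ i = 0"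
      by blast
    have "qphi_term [a, b] [C] q x k = 0" "qphi_term [a, b, x] [C, z] q x k = 0" if "k \<notin> {..i}" for k
      using i that by (auto intro: qphi_term_terminates)
    thus ?thesis
      by (intro conjI summable_finite[of "{..i}"]) auto
  next
    case False
    have "norm x < 1"
    proof (rule norm_lt_1_if_qphi_term_LIMSEQ_0[OF q _ _ summable_LIMSEQ_zero[OF summable]])
      show "1 - p * q ^ i \<noteq> 0" if "p \<in> set [x, x * q, a, b]" for p i
        using that False x[of "Suc i"] x[of "Suc (Suc i)"] by (auto simp: qpoch_Suc mult.assoc)
      show "qpochs [C, z, x] q n \<noteq> 0" for n
        using C z x by (simp add: qpochs_def)
    qed
    thus ?thesis
      using C z by (auto intro!: summable_norm_qphi_term[OF q] simp: qpochs_def)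
  qed
  thus "summable (\<lambda>k. norm (qphi_term [a, b] [C] q x k))"
    and "summable (\<lambda>k. norm (qphi_term [a, b, x] [C, z] q x k))"
    by blast+
qed

lemma qphi_term_append:
  "qphi_term (as @ [a]) (bs @ [b]) q w k = qphi_term as bs q w k * qpoch a q k / qpoch b q k"
  by (simp add: qphi_term_def qpochs_def divide_inverse ac_simps)

lemma qbinomial_mult_qphi:
  assumes q: "norm q < 1" and z: "norm z < 1"
    and summable: "summable (\<lambda>k. norm (qphi_term as bs q (g * z) k))"
  shows "qphi [g] [] q z * qphi as bs q (g * z)
       = (\<Sum>k. qphi_term (as @ [g * z]) (bs @ [z]) q (g * z) k * qphi [g] [] q (q ^ k * z))"
proof -
  have "qphi [g] [] q z * qphi as bs q (g * z) = (\<Sum>k. qphi [g] [] q z * qphi_term as bs q (g * z) k)"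
    by (simp only: qphi_def[of as bs] suminf_mult[OF summable_norm_cancel[OF summable]])
  moreover have "qphi [g] [] q z * qphi_term as bs q (g * z) k
      = qphi_term (as @ [g * z]) (bs @ [z]) q (g * z) k * qphi [g] [] q (q ^ k * z)" for k
  proof -
    have "qphi [g] [] q z * qpoch z q k = qpoch (g * z) q k * qphi [g] [] q (q ^ k * z)"
      by (rule q_difference_iterate[OF qbinomial_difference_equation[OF q] q z])
    thus ?thesis
      using qpoch_nonzero[of q z k] q z by (simp add: qphi_term_append field_simps)
  qed
  ultimately show ?thesis
    by simp
qed

lemma summable_on_dominated_product:
  fixes f :: "nat \<Rightarrow> nat \<Rightarrow> 'a::banach"
  assumes bound: "\<And>n k. norm (f n k) \<le> M n * c k" and M: "summable M" and c: "summable c"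
    and M_nonneg: "\<And>n. 0 \<le> M n" and c_nonneg: "\<And>k. 0 \<le> c k"
  shows "(\<lambda>(n, k). f n k) summable_on UNIV \<times> UNIV"
proof (rule abs_summable_summable, rule Infinite_Sum.abs_summable_on_comparison_test)
  have "((\<lambda>k. M n * c k) has_sum (M n * suminf c)) UNIV" for n
    using M_nonneg c_nonneg c
    by (intro norm_summable_imp_has_sum sums_mult summable_sums c) (simp add: summable_mult[OF c])
  moreover have "(\<lambda>n. M n * suminf c) summable_on UNIV"
    using M_nonneg suminf_nonneg[OF c c_nonneg]
    by (intro norm_summable_imp_summable_on) (simp add: summable_mult2[OF M])
  ultimately have "(\<lambda>(n, k). M n * c k) summable_on UNIV \<times> UNIV"
    using M_nonneg c_nonneg by (intro summable_on_SigmaI[where g = "\<lambda>n. M n * suminf c"]) auto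
  thus "(\<lambda>x. norm ((\<lambda>(n, k). M n * c k) x)) summable_on UNIV \<times> UNIV"
    using M_nonneg c_nonneg by (simp add: case_prod_unfold abs_mult)
  show "norm ((\<lambda>(n, k). f n k) x) \<le> norm ((\<lambda>(n, k). M n * c k) x)" for x
    using bound[of "fst x" "snd x"] M_nonneg c_nonneg by (cases x) (simp add: abs_mult)
qed

lemma suminf_swap_dominated:
  fixes f :: "nat \<Rightarrow> nat \<Rightarrow> 'a::banach"
  assumes bound: "\<And>n k. norm (f n k) \<le> M n * c k" and M: "summable M" and c: "summable c"
    and M_nonneg: "\<And>n. 0 \<le> M n" and c_nonneg: "\<And>k. 0 \<le> c k"
  shows "(\<Sum>n. \<Sum>k. f n k) = (\<Sum>k. \<Sum>n. f n k)"
proof -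
  have infsum_eq: "infsum h UNIV = suminf h" if "summable (\<lambda>n. norm (h n))" for h :: "nat \<Rightarrow> 'a"
    by (rule infsumI, rule norm_summable_imp_has_sum[OF that summable_sums[OF summable_norm_cancel[OF that]]])
  have row: "summable (\<lambda>k. norm (f n k))" for n
    by (rule summable_comparison_test[OF _ summable_mult[OF c, of "M n"]]) (use bound in auto)
  have col: "summable (\<lambda>n. norm (f n k))" for k
    by (rule summable_comparison_test[OF _ summable_mult2[OF M, of "c k"]]) (use bound in auto)
  have "summable (\<lambda>n. norm (\<Sum>k. f n k))"
  proof (rule summable_comparison_test[OF _ summable_mult2[OF M, of "suminf c"]])
    have "norm (\<Sum>k. f n k) \<le> (\<Sum>k. M n * c k)" for n
      by (rule order_trans[OF summable_norm[OF row] suminf_le[OF bound row summable_mult[OF c]]])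
    thus "\<exists>N. \<forall>n\<ge>N. norm (norm (\<Sum>k. f n k)) \<le> M n * suminf c"
      by (simp add: suminf_mult[OF c])
  qed
  moreover have "summable (\<lambda>k. norm (\<Sum>n. f n k))"
  proof (rule summable_comparison_test[OF _ summable_mult[OF c, of "suminf M"]])
    have "norm (\<Sum>n. f n k) \<le> (\<Sum>n. M n * c k)" for k
      by (rule order_trans[OF summable_norm[OF col] suminf_le[OF bound col summable_mult2[OF M]]])
    thus "\<exists>N. \<forall>k\<ge>N. norm (norm (\<Sum>n. f n k)) \<le> suminf M * c k"
      by (simp add: suminf_mult2[OF M])
  qed
  ultimately show ?thesis
    using infsum_swap_banach[OF summable_on_dominated_product[OF assms]] by (simp add: infsum_eq row col)
qed

lemma suminf_expansion_term_mult_qphi: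
  fixes a b C g q z :: complex
  defines "x \<equiv> g * z"
  assumes q: "norm q < 1" and z: "norm z < 1"
    and x_nonzero: "\<And>n k. qpoch (x * q ^ (2 * n)) q k \<noteq> 0"
    and summable_4_3: "\<And>n. summable
          (qphi_term [x * q ^ n, x * q ^ (2 * n + 1), a, b] [C, z * q ^ n, x * q ^ (2 * n)] q (x * q ^ n))"
    and summable_3_2: "summable (\<lambda>k. norm (qphi_term [a, b, x] [C, z] q x k))"
  shows "(\<Sum>n. expansion_term q g z n
            * qphi [x * q ^ n, x * q ^ (2 * n + 1), a, b] [C, z * q ^ n, x * q ^ (2 * n)] q (x * q ^ n))
       = (\<Sum>k. qphi_term [a, b, x] [C, z] q x k * qphi [g] [] q (q ^ k * z))"
proof -
  define c where "c k = qphi_term [a, b, x] [C, z] q x k" for k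
  have "expansion_term q g z n
          * qphi [x * q ^ n, x * q ^ (2 * n + 1), a, b] [C, z * q ^ n, x * q ^ (2 * n)] q (x * q ^ n)
      = (\<Sum>k. c k * expansion_term q g (q ^ k * z) n)" for n
    unfolding qphi_def c_def x_def
    using suminf_mult[OF summable_4_3[of n, unfolded x_def], of "expansion_term q g z n"]
      expansion_term_mult_qphi_term[OF x_nonzero[unfolded x_def]]
    by simp
  hence "(\<Sum>n. expansion_term q g z n
            * qphi [x * q ^ n, x * q ^ (2 * n + 1), a, b] [C, z * q ^ n, x * q ^ (2 * n)] q (x * q ^ n))
      = (\<Sum>n. \<Sum>k. c k * expansion_term q g (q ^ k * z) n)"
    by simp
  also have "\<dots> = (\<Sum>k. \<Sum>n. c k * expansion_term q g (q ^ k * z) n)"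
  proof (rule suminf_swap_dominated)
    show "norm (c k * expansion_term q g (q ^ k * z) n)
        \<le> (1 + norm g) * expansion_majorant q g (norm z) n * norm (c k)" for n k
    proof -
      have "norm (q ^ k * z) \<le> norm z"
        using q by (intro norm_power_mult_le) simp
      from norm_expansion_term_le[OF q this z, of g n] show ?thesis
        by (simp add: norm_mult mult.commute mult_left_mono)
    qed
    show "summable (\<lambda>n. (1 + norm g) * expansion_majorant q g (norm z) n)"
      by (rule summable_mult[OF summable_expansion_majorant[OF q]])
    show "0 \<le> (1 + norm g) * expansion_majorant q g (norm z) n" for n
      using expansion_majorant_nonneg[OF q z] by simp
  qed (use summable_3_2 in \<open>simp_all add: c_def\<close>)
  also have "\<dots> = (\<Sum>k. c k * qphi [g] [] q (q ^ k * z))"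
    using q z norm_power_mult_less_1[OF q z]
    by (simp add: qbinomial_eq_expansion suminf_mult summable_norm_cancel[OF summable_norm_expansion_term])
  finally show ?thesis
    by (simp add: c_def)
qed

theorem corollary3p2:
  fixes A B C q z :: complex
  assumes "norm q < 1" and "norm z < 1"
    and "A \<noteq> 0" and "B \<noteq> 0" and "C \<noteq> 0"
    and "\<And>n. qpoch C q n \<noteq> 0"
    and "\<And>n. qpoch z q n \<noteq> 0"
    and "\<And>n k. qpoch (z * q ^ n) q k \<noteq> 0"
    and "\<And>n k. qpoch (A * B * z * q ^ (2 * n) / C) q k \<noteq> 0"
    and "\<And>n. summable (qphi_term
                 [A * B * z * q ^ n / C, A * B * z * q ^ (2 * n + 1) / C, C / A, C / B]
                 [C, z * q ^ n, A * B * z * q ^ (2 * n) / C] q (A * B * z * q ^ n / C))"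
    and "summable (\<lambda>n. qpochs [A * B * q / C, A * B * z / C] q n / qpochs [q, z] q n
                 * z ^ n * q ^ (n * (n - 1)) * (1 - A * B * z * q ^ (2 * n) / C)
                 * qphi [A * B * z * q ^ n / C, A * B * z * q ^ (2 * n + 1) / C, C / A, C / B]
                        [C, z * q ^ n, A * B * z * q ^ (2 * n) / C] q (A * B * z * q ^ n / C))"
  shows "qphi [A, B] [C] q z =
    (\<Sum>n. qpochs [A * B * q / C, A * B * z / C] q n / qpochs [q, z] q n
                 * z ^ n * q ^ (n * (n - 1)) * (1 - A * B * z * q ^ (2 * n) / C)
                 * qphi [A * B * z * q ^ n / C, A * B * z * q ^ (2 * n + 1) / C, C / A, C / B]
                        [C, z * q ^ n, A * B * z * q ^ (2 * n) / C] q (A * B * z * q ^ n / C))"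
proof -
  note q = assms(1) and z = assms(2) and nonzero = assms(3-5) and C = assms(6)
  define g where "g = A * B / C"
  have x_pow: "A * B * z * q ^ m / C = g * z * q ^ m" for m
    by (simp add: g_def)
  have x: "A * B * z / C = g * z" and gq: "A * B * q / C = g * q"
    by (simp_all add: g_def)
  have x_nonzero: "qpoch (g * z * q ^ (2 * n)) q k \<noteq> 0" for n k
    using assms(9) unfolding x_pow .
  have summable_2_1: "summable (\<lambda>k. norm (qphi_term [C / A, C / B] [C] q (g * z) k))"
    and summable_3_2: "summable (\<lambda>k. norm (qphi_term [C / A, C / B, g * z] [C, z] q (g * z) k))"
    using summable_norm_terms_if_summable_4_3[OF q C assms(7), of "g * z" "C / A" "C / B"]
      x_nonzero[of 0] assms(10)[of 0, unfolded x_pow] by simp_all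
  have "qphi [A, B] [C] q z = qphi [g] [] q z * qphi [C / A, C / B] [C] q (g * z)"
    using qphi_2_1_Euler_transformation[OF q z nonzero C] summable_2_1 unfolding x g_def[symmetric]
    by blast
  also have "\<dots> = (\<Sum>k. qphi_term [C / A, C / B, g * z] [C, z] q (g * z) k * qphi [g] [] q (q ^ k * z))"
    using qbinomial_mult_qphi[OF q z summable_2_1] by simp
  also have "\<dots> = (\<Sum>n. expansion_term q g z n * qphi [g * z * q ^ n, g * z * q ^ (2 * n + 1), C / A, C / B]
                        [C, z * q ^ n, g * z * q ^ (2 * n)] q (g * z * q ^ n))"
    using suminf_expansion_term_mult_qphi[OF q z x_nonzero _ summable_3_2] assms(10)[unfolded x_pow]
    by simp
  finally show ?thesis
    unfolding x_pow x gq expansion_term_def expansion_coeff_def .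
qed

end
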